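(* Let $d\ge 1$, $T>0$, $\alpha\ge 0$, and let $H:\mathbb{R}\to\mathbb{C}^{d\times d}$ be a continuously differentiable map such that $H(v)$ is Hermitian for every $v\in\mathbb{R}$ (so that $\partial_v H(v)$ is Hermitian as well). Let $u:[0,T]\to\mathbb{R}$ be a continuous control, and let $|\psi_i\rangle,|\psi_f\rangle\in\mathbb{C}^d$. Let $|\psi(t)\rangle$ and $|\chi(t)\rangle$ be the solutions on $[0,T]$ of $$ i\,\partial_t|\psi(t)\rangle = H(u(t))|\psi(t)\rangle,\quad |\psi(0)\rangle=|\psi_i\rangle, \qquad i\,\partial_t|\chi(t)\rangle = H(u(t))|\chi(t)\rangle,\quad |\chi(T)\rangle=|\psi_f\rangle .$$ Define the gradient of the figure of merit $\mathcal{J}[u]=\mathrm{Re}\,\langle\psi(T)|\psi_f\rangle-\frac{\alpha}{2}\int_0^T u(t)^2\,dt$ by $$\nabla\mathcal{J}[u](t) = -\alpha u(t) + \mathrm{Im}\,\langle\chi(t)|\partial_v H(u(t))|\psi(t)\rangle,\qquad t\in[0,T].$$ Let $N\in\mathbb{N}$, $0=t_0<t_1<\dots<t_N=T$, and for $n=0,\dots,N$ define the intermediate states $$|\varphi^u_n\rangle=\frac{T-t_n}{T}|\psi(t_n)\rangle+\frac{t_n}{T}|\chi(t_n)\rangle .$$ For $0\le n\le N-1$ set $\alpha_n=\frac{t_{n+1}-t_n}{T}\alpha$ and $\beta_n=\frac{T}{t_{n+1}-t_n}$, and let $|\psi_n(t)\rangle$, $|\chi_n(t)\rangle$ be the solutions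 on $[t_n,t_{n+1}]$ of $$ i\,\partial_t|\psi_n(t)\rangle = H(u(t))|\psi_n(t)\rangle,\ |\psi_n(t_n)\rangle=|\varphi^u_n\rangle,\qquad i\,\partial_t|\chi_n(t)\rangle = H(u(t))|\chi_n(t)\rangle,\ |\chi_n(t_{n+1})\rangle=|\varphi^u_{n+1}\rangle ,$$ and define the gradient of the sub-functional $\mathcal{J}_n[u_n,|\varphi^u\rangle]=-\frac12\big\||\psi_n(t_{n+1})\rangle-|\varphi^u_{n+1}\rangle\big\|^2-\frac{\alpha_n}{2}\int_{t_n}^{t_{n+1}}u_n(t)^2dt$ (with $u_n=u|_{[t_n,t_{n+1}]}$) by $$\nabla\mathcal{J}_n[u|_{[t_n,t_{n+1}]},|\varphi^u\rangle](t) = -\alpha_n u(t) + \mathrm{Im}\,\langle\chi_n(t)|\partial_v H(u(t))|\psi_n(t)\rangle,\qquad t\in[t_n,t_{n+1}].$$ Then for every $n\in\{0,\dots,N-1\}$ and every $t\in[t_n,t_{n+1}]$, $$\nabla\mathcal{J}[u](t)=\beta_n\,\nabla\mathcal{J}_n[u|_{[t_n,t_{n+1}]},|\varphi^u\rangle](t).$$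
   Context: Bra-ket notation: $\langle a|B|c\rangle$ denotes the Hermitian inner product of $|a\rangle$ with $B|c\rangle$ (antilinear in the first argument); $\|\cdot\|$ is the associated norm. $\partial_v H(v)$ denotes the derivative of $H$ with respect to its scalar argument $v$. All differential equations are linear ODEs in $\mathbb{C}^d$ with continuous coefficients, so their solutions exist and are unique on the stated intervals. *)

theory Defs
  imports "HOL-Analysis.Analysis"
begin

definition braket :: "complex^'d \<Rightarrow> complex^'d \<Rightarrow> complex" where
  "braket a b = (\<Sum>i\<in>UNIV. cnj (a $ i) * b $ i)"

definition hermitian_mat :: "complex^'d^'d \<Rightarrow> bool" where
  "hermitian_mat A \<longleftrightarrow> (\<forall>i j. A $ i $ j = cnj (A $ j $ i))"

definition grad_expr ::
  "real \<Rightarrow> (real \<Rightarrow> real) \<Rightarrow> (real \<Rightarrow> complex^'d^'d) \<Rightarrow> (real \<Rightarrow> complex^'d)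
   \<Rightarrow> (real \<Rightarrow> complex^'d) \<Rightarrow> real \<Rightarrow> real" where
  "grad_expr a u dH chi psi t = - a * u t + Im (braket (chi t) (dH (u t) *v psi t))"

end

theory Submission
  imports Defs
begin

text \<open>On each subinterval [t_n, t_{n+1}] both psi_n and chi_n are real linear combinations of
  psi and chi: the combinations solve the same linear Schroedinger equation and agree with
  them at t_n resp. t_{n+1}, and solutions are unique because the norm is conserved.
  Substituting into <chi_n|dH|psi_n>, the diagonal terms <psi|dH|psi>, <chi|dH|chi> are real
  and the two cross terms have opposite imaginary parts, so only
  (t_{n+1} - t_n)/T * Im <chi|dH|psi> survives.\<close>

lemma braket_cnj: "braket y x = cnj (braket x y)"
  unfolding braket_def by (simp add: mult.commute)

lemma braket_add_left: "braket (x + z) y = braket x y + braket z y"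
  unfolding braket_def by (simp add: sum.distrib algebra_simps)

lemma braket_add_right: "braket x (y + z) = braket x y + braket x z"
  unfolding braket_def by (simp add: sum.distrib algebra_simps)

lemma braket_smult_left: "braket (c *s x) y = cnj c * braket x y"
  unfolding braket_def by (simp add: sum_distrib_left mult_ac)

lemma braket_smult_right: "braket x (c *s y) = c * braket x y"
  unfolding braket_def by (simp add: sum_distrib_left mult_ac)

lemma scaleR_eq_smult: "r *\<^sub>R (x :: complex^'n) = complex_of_real r *s x"
  unfolding scaleR_vec_def vector_scalar_mult_def by (simp add: scaleR_conv_of_real)

lemma braket_scaleR_left: "braket (r *\<^sub>R x) y = of_real r * braket x y"
  unfolding scaleR_eq_smult braket_smult_left by simp

lemma braket_scaleR_right: "braket x (r *\<^sub>R y) = of_real r * braket x y"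
  unfolding scaleR_eq_smult braket_smult_right by simp

lemma matrix_vector_mult_scaleR: "(A :: complex^'n^'m) *v (r *\<^sub>R x) = r *\<^sub>R (A *v x)"
  unfolding scaleR_eq_smult by (simp add: vec_eq_iff matrix_vector_mult_def vector_scalar_mult_def
      sum_distrib_left mult_ac)

lemma Re_braket_self: "Re (braket x x) = (\<Sum>i\<in>UNIV. (cmod (x $ i))\<^sup>2)"
  unfolding braket_def cmod_power2 by (simp add: power2_eq_square)

lemma braket_self_eq_0_iff: "braket x x = 0 \<longleftrightarrow> x = 0"
proof
  assume "braket x x = 0"
  then have "(\<Sum>i\<in>UNIV. (cmod (x $ i))\<^sup>2) = 0"
    by (simp add: Re_braket_self[symmetric])
  then show "x = 0"
    by (simp add: sum_nonneg_eq_0_iff vec_eq_iff)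
qed (simp add: braket_def)

lemma has_vector_derivative_braket_self:
  assumes "(e has_vector_derivative e') (at s within S)"
  shows "((\<lambda>s. braket (e s) (e s)) has_vector_derivative braket e' (e s) + braket (e s) e')
           (at s within S)"
proof -
  have component: "((\<lambda>s. e s $ i) has_vector_derivative e' $ i) (at s within S)" for i
    by (rule bounded_linear.has_vector_derivative[OF bounded_linear_vec_nth assms])
  have "((\<lambda>s. \<Sum>i\<in>UNIV. cnj (e s $ i) * e s $ i) has_vector_derivative
          (\<Sum>i\<in>UNIV. cnj (e s $ i) * e' $ i + cnj (e' $ i) * e s $ i)) (at s within S)"
    by (intro has_vector_derivative_sum has_vector_derivative_mult has_vector_derivative_cnj component)
  then show ?thesis
    unfolding braket_def by (simp add: sum.distrib add.commute)
qed

lemma hermitian_mat_braket_adjoint: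
  assumes "hermitian_mat A"
  shows "braket (A *v x) y = braket x (A *v y)"
proof -
  have A_cnj: "cnj (A $ i $ j) = A $ j $ i" for i j
    using assms unfolding hermitian_mat_def by (metis complex_cnj_cnj)
  have "braket (A *v x) y = (\<Sum>i\<in>UNIV. \<Sum>j\<in>UNIV. cnj (A $ i $ j) * cnj (x $ j) * y $ i)"
    unfolding braket_def matrix_vector_mult_def by (simp add: sum_distrib_right)
  also have "\<dots> = (\<Sum>j\<in>UNIV. \<Sum>i\<in>UNIV. cnj (x $ j) * (A $ j $ i * y $ i))"
    by (subst sum.swap) (simp add: A_cnj mult_ac)
  also have "\<dots> = braket x (A *v y)"
    unfolding braket_def matrix_vector_mult_def by (simp add: sum_distrib_left)
  finally show ?thesis .
qed

lemma hermitian_mat_Im_braket_self: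
  assumes "hermitian_mat A"
  shows "Im (braket x (A *v x)) = 0"
proof -
  have "braket x (A *v x) = cnj (braket x (A *v x))"
    using hermitian_mat_braket_adjoint[OF assms, of x x] braket_cnj[of x "A *v x"] by simp
  then show ?thesis
    by (metis complex_is_Real_iff Reals_cnj_iff)
qed

lemma hermitian_mat_Im_braket_swap:
  assumes "hermitian_mat A"
  shows "Im (braket y (A *v x)) = - Im (braket x (A *v y))"
proof -
  have "braket y (A *v x) = cnj (braket x (A *v y))"
    using hermitian_mat_braket_adjoint[OF assms, of y x] braket_cnj[of "A *v y" x] by simp
  then show ?thesis by simp
qed

lemma hermitian_mat_Im_braket_combination:
  assumes "hermitian_mat A"
  shows "Im (braket (a' *\<^sub>R x + b' *\<^sub>R y) (A *v (a *\<^sub>R x + b *\<^sub>R y)))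
           = (a * b' - a' * b) * Im (braket y (A *v x))"
  using hermitian_mat_Im_braket_self[OF assms, of x] hermitian_mat_Im_braket_self[OF assms, of y]
    hermitian_mat_Im_braket_swap[OF assms, of x y]
  by (simp add: matrix_vector_right_distrib matrix_vector_mult_scaleR braket_add_left
      braket_add_right braket_scaleR_left braket_scaleR_right algebra_simps)

lemma hermitian_mat_has_vector_derivative:
  assumes H_deriv: "\<And>v. (H has_vector_derivative dH v) (at v)"
    and H_herm: "\<And>v. hermitian_mat (H v)"
  shows "hermitian_mat (dH v)"
  unfolding hermitian_mat_def
proof (intro allI)
  fix i j
  have row: "((\<lambda>v. H v $ k) has_vector_derivative dH v $ k) (at v)" for k
    by (rule bounded_linear.has_vector_derivative[OF bounded_linear_vec_nth H_deriv])
  have entry: "((\<lambda>v. H v $ k $ l) has_vector_derivative dH v $ k $ l) (at v)" for k l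
    by (rule bounded_linear.has_vector_derivative[OF bounded_linear_vec_nth row])
  have "(\<lambda>v. cnj (H v $ j $ i)) = (\<lambda>v. H v $ i $ j)"
    using H_herm unfolding hermitian_mat_def by metis
  then have "((\<lambda>v. H v $ i $ j) has_vector_derivative cnj (dH v $ j $ i)) (at v)"
    by (metis has_vector_derivative_cnj entry)
  then show "dH v $ i $ j = cnj (dH v $ j $ i)"
    by (rule vector_derivative_unique_at[OF entry])
qed

definition schroedinger_solution ::
  "(real \<Rightarrow> complex^'d^'d) \<Rightarrow> real set \<Rightarrow> (real \<Rightarrow> complex^'d) \<Rightarrow> bool" where
  "schroedinger_solution A S f \<longleftrightarrow>
     (\<forall>s\<in>S. (f has_vector_derivative (- \<i>) *s (A s *v f s)) (at s within S))"

lemma schroedinger_solution_subset: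
  "schroedinger_solution A S f \<Longrightarrow> S' \<subseteq> S \<Longrightarrow> schroedinger_solution A S' f"
  unfolding schroedinger_solution_def by (meson has_vector_derivative_within_subset subsetD)

lemma schroedinger_solution_combination:
  assumes "schroedinger_solution A S f" "schroedinger_solution A S g"
  shows "schroedinger_solution A S (\<lambda>s. r *\<^sub>R f s + q *\<^sub>R g s)"
  unfolding schroedinger_solution_def
proof
  fix s assume "s \<in> S"
  then have "((\<lambda>s. r *\<^sub>R f s + q *\<^sub>R g s) has_vector_derivative
      r *\<^sub>R ((- \<i>) *s (A s *v f s)) + q *\<^sub>R ((- \<i>) *s (A s *v g s))) (at s within S)"
    using assms unfolding schroedinger_solution_def
    by (intro has_vector_derivative_add
        bounded_linear.has_vector_derivative[OF bounded_linear_scaleR_right]) auto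
  moreover have "r *\<^sub>R ((- \<i>) *s (A s *v f s)) + q *\<^sub>R ((- \<i>) *s (A s *v g s))
      = (- \<i>) *s (A s *v (r *\<^sub>R f s + q *\<^sub>R g s))"
    unfolding scaleR_eq_smult
    by (simp add: vec_eq_iff vector_scalar_mult_def matrix_vector_mult_def sum_distrib_left
        sum.distrib algebra_simps)
  ultimately show "((\<lambda>s. r *\<^sub>R f s + q *\<^sub>R g s) has_vector_derivative
      (- \<i>) *s (A s *v (r *\<^sub>R f s + q *\<^sub>R g s))) (at s within S)"
    by simp
qed

lemma schroedinger_solution_diff:
  assumes "schroedinger_solution A S f" "schroedinger_solution A S g"
  shows "schroedinger_solution A S (\<lambda>s. f s - g s)"
  using schroedinger_solution_combination[OF assms, of 1 "-1"] by simp

lemma schroedinger_solution_braket_self_const: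
  assumes "schroedinger_solution A {a..b} f" "\<And>s. hermitian_mat (A s)"
  obtains k where "\<And>s. s \<in> {a..b} \<Longrightarrow> braket (f s) (f s) = k"
proof -
  have "((\<lambda>s. braket (f s) (f s)) has_vector_derivative 0) (at s within {a..b})"
    if "s \<in> {a..b}" for s
  proof -
    have "braket ((- \<i>) *s (A s *v f s)) (f s) + braket (f s) ((- \<i>) *s (A s *v f s)) = 0"
      unfolding braket_smult_left braket_smult_right hermitian_mat_braket_adjoint[OF assms(2)]
      by simp
    then show ?thesis
      using has_vector_derivative_braket_self[of f _ s "{a..b}"] that assms(1)
      unfolding schroedinger_solution_def by metis
  qed
  then show ?thesis
    using that has_vector_derivative_zero_constant[OF convex_real_interval(5)] by blast
qed

lemma schroedinger_solution_unique:
  assumes f: "schroedinger_solution A {a..b} f" and g: "schroedinger_solution A {a..b} g"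
    and A_herm: "\<And>s. hermitian_mat (A s)"
    and c: "c \<in> {a..b}" "f c = g c" and s: "s \<in> {a..b}"
  shows "f s = g s"
proof -
  obtain k where k: "\<And>s. s \<in> {a..b} \<Longrightarrow> braket (f s - g s) (f s - g s) = k"
    using schroedinger_solution_braket_self_const[OF schroedinger_solution_diff[OF f g] A_herm]
    by blast
  have "k = 0"
    using k[OF c(1)] c(2) by (simp add: braket_def)
  then show ?thesis
    using k[OF s] by (simp add: braket_self_eq_0_iff)
qed

lemma schroedinger_solution_eq_combination:
  assumes f: "schroedinger_solution A {a..b} f"
    and g: "schroedinger_solution A S g" and h: "schroedinger_solution A S h"
    and sub: "{a..b} \<subseteq> S" and A_herm: "\<And>s. hermitian_mat (A s)"
    and c: "c \<in> {a..b}" "f c = r *\<^sub>R g c + q *\<^sub>R h c" and s: "s \<in> {a..b}"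
  shows "f s = r *\<^sub>R g s + q *\<^sub>R h s"
  using schroedinger_solution_unique[OF f
      schroedinger_solution_subset[OF schroedinger_solution_combination[OF g h] sub] A_herm c s] .

lemma partition_interval_subset:
  fixes tt :: "nat \<Rightarrow> real"
  assumes incr: "\<And>n. n < N \<Longrightarrow> tt n < tt (Suc n)" and n: "n < N"
  shows "{tt n..tt (Suc n)} \<subseteq> {tt 0..tt N}"
proof -
  have mono: "tt m \<le> tt k" if "m \<le> k" "k \<le> N" for m k
    using that
  proof (induction k rule: dec_induct)
    case (step k)
    then have "tt m \<le> tt k" "tt k < tt (Suc k)"
      using incr[of k] by simp_all
    then show ?case by linarith
  qed simp
  show ?thesis
    using mono[of 0 n] mono[of "Suc n" N] n by auto
qed

theorem theorem2:
  fixes H dH :: "real \<Rightarrow> complex^'d^'d"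
    and T \<alpha> :: real
    and u :: "real \<Rightarrow> real"
    and psi_i psi_f :: "complex^'d"
    and psi chi :: "real \<Rightarrow> complex^'d"
    and N :: nat and tt :: "nat \<Rightarrow> real"
    and phi :: "nat \<Rightarrow> complex^'d"
    and psin chin :: "nat \<Rightarrow> real \<Rightarrow> complex^'d"
  assumes T_pos: "T > 0"
    and alpha_nn: "\<alpha> \<ge> 0"
    and H_deriv: "\<And>v. (H has_vector_derivative dH v) (at v)"
    and dH_cont: "continuous_on UNIV dH"
    and H_herm: "\<And>v. hermitian_mat (H v)"
    and u_cont: "continuous_on {0..T} u"
    and psi_ode: "\<And>s. s \<in> {0..T} \<Longrightarrow>
        (psi has_vector_derivative ((- \<i>) *s (H (u s) *v psi s))) (at s within {0..T})"
    and psi_init: "psi 0 = psi_i"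
    and chi_ode: "\<And>s. s \<in> {0..T} \<Longrightarrow>
        (chi has_vector_derivative ((- \<i>) *s (H (u s) *v chi s))) (at s within {0..T})"
    and chi_final: "chi T = psi_f"
    and t0: "tt 0 = 0" and tN: "tt N = T"
    and t_incr: "\<And>n. n < N \<Longrightarrow> tt n < tt (Suc n)"
    and phi_def: "\<And>n. n \<le> N \<Longrightarrow>
        phi n = ((T - tt n) / T) *\<^sub>R psi (tt n) + (tt n / T) *\<^sub>R chi (tt n)"
    and psin_ode: "\<And>n s. n < N \<Longrightarrow> s \<in> {tt n..tt (Suc n)} \<Longrightarrow>
        (psin n has_vector_derivative ((- \<i>) *s (H (u s) *v psin n s))) (at s within {tt n..tt (Suc n)})"
    and psin_init: "\<And>n. n < N \<Longrightarrow> psin n (tt n) = phi n"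
    and chin_ode: "\<And>n s. n < N \<Longrightarrow> s \<in> {tt n..tt (Suc n)} \<Longrightarrow>
        (chin n has_vector_derivative ((- \<i>) *s (H (u s) *v chin n s))) (at s within {tt n..tt (Suc n)})"
    and chin_final: "\<And>n. n < N \<Longrightarrow> chin n (tt (Suc n)) = phi (Suc n)"
  shows "\<forall>n < N. \<forall>s \<in> {tt n..tt (Suc n)}.
           grad_expr \<alpha> u dH chi psi s =
           (T / (tt (Suc n) - tt n)) *
             grad_expr (((tt (Suc n) - tt n) / T) * \<alpha>) u dH (chin n) (psin n) s"
proof (intro allI impI ballI)
  fix n s assume n: "n < N" and s: "s \<in> {tt n..tt (Suc n)}"
  let ?I = "{tt n..tt (Suc n)}" and ?A = "\<lambda>s. H (u s)"
  have psi_sol: "schroedinger_solution ?A {0..T} psi"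
    using psi_ode unfolding schroedinger_solution_def by blast
  have chi_sol: "schroedinger_solution ?A {0..T} chi"
    using chi_ode unfolding schroedinger_solution_def by blast
  have sub: "?I \<subseteq> {0..T}"
    using partition_interval_subset[of N tt, OF t_incr n] t0 tN by simp
  have bounds: "tt n \<in> ?I" "tt (Suc n) \<in> ?I"
    using t_incr[OF n] by auto
  have psin_eq: "psin n s = ((T - tt n) / T) *\<^sub>R psi s + (tt n / T) *\<^sub>R chi s"
    using psin_ode[OF n] psin_init[OF n] phi_def[of n] n
    by (intro schroedinger_solution_eq_combination[OF _ psi_sol chi_sol sub H_herm bounds(1) _ s])
      (auto simp: schroedinger_solution_def)
  have chin_eq: "chin n s = ((T - tt (Suc n)) / T) *\<^sub>R psi s + (tt (Suc n) / T) *\<^sub>R chi s"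
    using chin_ode[OF n] chin_final[OF n] phi_def[of "Suc n"] n
    by (intro schroedinger_solution_eq_combination[OF _ psi_sol chi_sol sub H_herm bounds(2) _ s])
      (auto simp: schroedinger_solution_def)
  have dH_herm: "hermitian_mat (dH (u s))"
    by (rule hermitian_mat_has_vector_derivative[OF H_deriv H_herm])
  have "Im (braket (chin n s) (dH (u s) *v psin n s))
          = ((T - tt n) / T * (tt (Suc n) / T) - (T - tt (Suc n)) / T * (tt n / T))
            * Im (braket (chi s) (dH (u s) *v psi s))"
    unfolding psin_eq chin_eq by (rule hermitian_mat_Im_braket_combination[OF dH_herm])
  also have "(T - tt n) / T * (tt (Suc n) / T) - (T - tt (Suc n)) / T * (tt n / T)
               = (tt (Suc n) - tt n) / T"
    using T_pos by (simp add: field_simps power2_eq_square)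
  finally have Im_braket_eq: "Im (braket (chin n s) (dH (u s) *v psin n s))
      = (tt (Suc n) - tt n) / T * Im (braket (chi s) (dH (u s) *v psi s))" .
  show "grad_expr \<alpha> u dH chi psi s = (T / (tt (Suc n) - tt n)) *
      grad_expr (((tt (Suc n) - tt n) / T) * \<alpha>) u dH (chin n) (psin n) s"
    unfolding grad_expr_def Im_braket_eq using T_pos t_incr[OF n] by (simp add: field_simps)
qed

end
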